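(* Let $p\ge1$ and $\nu\in\mathcal{W}_p(\mathbb{R}^d)$. Then the closure of $\mathcal{Q}_\infty(\nu)$ in $\mathcal{W}_p(\mathbb{R}^d)$ equals $$\mathcal{S}_p(\nu)=\{\mu\in\mathcal{W}_p(\mathbb{R}^d):\operatorname{supp}\mu\subset\operatorname{supp}\nu\}.$$
   Context: $\mathcal{W}_p(\mathbb{R}^d)$ is the space of Borel probability measures on $\mathbb{R}^d$ with finite $p$-th moment, equipped with the Wasserstein metric $W_p(\mu,\nu)=\big(\inf_{\gamma\in\Pi(\mu,\nu)}\int|x-y|^p\,d\gamma\big)^{1/p}$, where $\Pi(\mu,\nu)$ is the set of couplings of $\mu$ and $\nu$. $\mathcal{Q}_\infty(\nu)$ is the set of Borel probability measures $\mu\ll\nu$ with $d\mu/d\nu$ bounded. $\operatorname{supp}$ denotes the support (smallest closed set of full measure). *)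

theory Defs
  imports "HOL-Probability.Probability"
begin

definition Wspace :: "real \<Rightarrow> 'a::euclidean_space measure set" where
  "Wspace p = {\<mu>. sets \<mu> = sets borel \<and> prob_space \<mu> \<and>
                  (\<integral>\<^sup>+ x. ennreal (norm x powr p) \<partial>\<mu>) < \<infinity>}"

definition couplings :: "'a::euclidean_space measure \<Rightarrow> 'a measure \<Rightarrow> ('a \<times> 'a) measure set" where
  "couplings \<mu> \<nu> = {\<gamma>. sets \<gamma> = sets borel \<and> prob_space \<gamma> \<and>
                        distr \<gamma> borel fst = \<mu> \<and> distr \<gamma> borel snd = \<nu>}"

definition Wdist :: "real \<Rightarrow> 'a::euclidean_space measure \<Rightarrow> 'a measure \<Rightarrow> real" where
  "Wdist p \<mu> \<nu> = enn2real (INF \<gamma>\<in>couplings \<mu> \<nu>. \<integral>\<^sup>+ z. ennreal (norm (fst z - snd z) powr p) \<partial>\<gamma>)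
                   powr (1 / p)"

definition Wclosure :: "real \<Rightarrow> 'a::euclidean_space measure set \<Rightarrow> 'a measure set" where
  "Wclosure p A = {\<mu> \<in> Wspace p. \<forall>e>0. \<exists>q\<in>A \<inter> Wspace p. Wdist p q \<mu> < e}"

definition supp :: "'a::euclidean_space measure \<Rightarrow> 'a set" where
  "supp \<mu> = \<Inter> {C. closed C \<and> emeasure \<mu> (space \<mu> - C) = 0}"

definition Qinf :: "'a::euclidean_space measure \<Rightarrow> 'a measure set" where
  "Qinf \<nu> = {\<mu>. prob_space \<mu> \<and> (\<exists>f \<in> borel_measurable borel. (\<exists>C::real. \<forall>x. f x \<le> ennreal C)
                 \<and> \<mu> = density \<nu> f)}"

end

theory Submission
  imports Defs
begin

text \<open>
  Necessity: if \<open>\<nu>\<close> vanishes off a closed set \<open>C\<close>, so does every \<open>q \<in> Qinf \<nu>\<close>. A coupling of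
  \<open>q\<close> and \<open>\<mu>\<close> must then carry the \<open>\<mu>\<close>-mass lying at distance \<open>> r\<close> from \<open>C\<close> over a distance
  \<open>> r\<close>, so this mass is at most \<open>Wdist p q \<mu> ^ p / r ^ p\<close>; approximating \<open>\<mu>\<close> forces it to
  vanish. Hence \<open>\<mu>\<close> vanishes off every closed \<open>\<nu>\<close>-full set, i.e. \<open>supp \<mu> \<subseteq> supp \<nu>\<close>.

  Sufficiency: outside a large ball the cost of transporting \<open>\<mu>\<close> to \<open>\<nu>\<close> is small. Inside it,
  cover \<open>supp \<mu>\<close> by finitely many \<open>\<delta>\<close>-balls centred in \<open>supp \<mu> \<subseteq> supp \<nu>\<close>, which have positive
  \<open>\<nu>\<close>-measure. A partition of unity subordinate to this cover yields a transport kernel that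
  moves the mass at \<open>y\<close> into normalised restrictions of \<open>\<nu>\<close> to balls containing \<open>y\<close>, and the
  far mass onto \<open>\<nu>\<close> itself. Its first marginal has a bounded density with respect to \<open>\<nu>\<close>,
  and the coupling costs at most \<open>(2 \<delta>) ^ p\<close> plus the tail.
\<close>

section \<open>Couplings and transport cost\<close>

lemma pair_prob_spaceI: "prob_space M1 \<Longrightarrow> prob_space M2 \<Longrightarrow> pair_prob_space M1 M2"
  by (simp add: pair_prob_space_def pair_sigma_finite_def prob_space_imp_sigma_finite)

lemma space_eq_UNIV_if_sets_borel:
  "sets M = sets (borel :: 'a::topological_space measure) \<Longrightarrow> space M = UNIV"
  by (metis sets_eq_imp_space_eq space_borel)

lemma sets_pair_measure_borel:
  assumes "sets M = sets (borel :: 'a::second_countable_topology measure)"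
    and "sets N = sets (borel :: 'b::second_countable_topology measure)"
  shows "sets (M \<Otimes>\<^sub>M N) = sets (borel :: ('a \<times> 'b) measure)"
  by (metis sets_pair_measure_cong[OF assms] borel_prod)

lemma (in pair_sigma_finite) distr_fst_density:
  assumes g: "g \<in> borel_measurable (M1 \<Otimes>\<^sub>M M2)"
  shows "distr (density (M1 \<Otimes>\<^sub>M M2) g) M1 fst = density M1 (\<lambda>x. \<integral>\<^sup>+y. g (x, y) \<partial>M2)"
proof (rule measure_eqI)
  fix A assume "A \<in> sets (distr (density (M1 \<Otimes>\<^sub>M M2) g) M1 fst)"
  then have A: "A \<in> sets M1" by simp
  have "fst -` A \<inter> space (M1 \<Otimes>\<^sub>M M2) = A \<times> space M2"
    using sets.sets_into_space[OF A] by (auto simp: space_pair_measure)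
  then have "emeasure (distr (density (M1 \<Otimes>\<^sub>M M2) g) M1 fst) A
      = (\<integral>\<^sup>+w. g w * indicator (A \<times> space M2) w \<partial>(M1 \<Otimes>\<^sub>M M2))"
    using A g by (simp add: emeasure_distr emeasure_density)
  also have "\<dots> = (\<integral>\<^sup>+x. \<integral>\<^sup>+y. g (x, y) * indicator (A \<times> space M2) (x, y) \<partial>M2 \<partial>M1)"
    using A g by (subst M2.nn_integral_fst) auto
  also have "\<dots> = (\<integral>\<^sup>+x. (\<integral>\<^sup>+y. g (x, y) \<partial>M2) * indicator A x \<partial>M1)"
    using g by (intro nn_integral_cong)
      (auto simp: indicator_times nn_integral_multc mult.assoc[symmetric] intro!: nn_integral_cong)
  also have "\<dots> = emeasure (density M1 (\<lambda>x. \<integral>\<^sup>+y. g (x, y) \<partial>M2)) A"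
    using A g by (simp add: emeasure_density M2.borel_measurable_nn_integral)
  finally show "emeasure (distr (density (M1 \<Otimes>\<^sub>M M2) g) M1 fst) A
      = emeasure (density M1 (\<lambda>x. \<integral>\<^sup>+y. g (x, y) \<partial>M2)) A" .
qed simp

lemma (in pair_sigma_finite) distr_snd_density:
  assumes g: "g \<in> borel_measurable (M1 \<Otimes>\<^sub>M M2)"
  shows "distr (density (M1 \<Otimes>\<^sub>M M2) g) M2 snd = density M2 (\<lambda>y. \<integral>\<^sup>+x. g (x, y) \<partial>M1)"
proof (rule measure_eqI)
  fix A assume "A \<in> sets (distr (density (M1 \<Otimes>\<^sub>M M2) g) M2 snd)"
  then have A: "A \<in> sets M2" by simp
  have "snd -` A \<inter> space (M1 \<Otimes>\<^sub>M M2) = space M1 \<times> A"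
    using sets.sets_into_space[OF A] by (auto simp: space_pair_measure)
  then have "emeasure (distr (density (M1 \<Otimes>\<^sub>M M2) g) M2 snd) A
      = (\<integral>\<^sup>+w. g w * indicator (space M1 \<times> A) w \<partial>(M1 \<Otimes>\<^sub>M M2))"
    using A g by (simp add: emeasure_distr emeasure_density)
  also have "\<dots> = (\<integral>\<^sup>+y. \<integral>\<^sup>+x. g (x, y) * indicator (space M1 \<times> A) (x, y) \<partial>M1 \<partial>M2)"
    using A g by (subst nn_integral_snd) auto
  also have "\<dots> = (\<integral>\<^sup>+y. (\<integral>\<^sup>+x. g (x, y) \<partial>M1) * indicator A y \<partial>M2)"
    using g by (intro nn_integral_cong)
      (auto simp: indicator_times nn_integral_multc mult.assoc[symmetric] intro!: nn_integral_cong)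
  also have "\<dots> = emeasure (density M2 (\<lambda>y. \<integral>\<^sup>+x. g (x, y) \<partial>M1)) A"
    using A g by (simp add: emeasure_density M1.borel_measurable_nn_integral)
  finally show "emeasure (distr (density (M1 \<Otimes>\<^sub>M M2) g) M2 snd) A
      = emeasure (density M2 (\<lambda>y. \<integral>\<^sup>+x. g (x, y) \<partial>M1)) A" .
qed simp

lemma density_pair_in_couplings:
  fixes \<nu> \<mu> :: "'a::euclidean_space measure"
  assumes sets: "sets \<nu> = sets borel" "sets \<mu> = sets borel"
    and prob: "prob_space \<nu>" "prob_space \<mu>"
    and g: "g \<in> borel_measurable borel"
    and normalized: "\<And>y. (\<integral>\<^sup>+x. g (x, y) \<partial>\<nu>) = 1"
  shows "density (\<nu> \<Otimes>\<^sub>M \<mu>) g \<in> couplings (density \<nu> (\<lambda>x. \<integral>\<^sup>+y. g (x, y) \<partial>\<mu>)) \<mu>"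
proof -
  interpret pair_prob_space \<nu> \<mu>
    using prob by (rule pair_prob_spaceI)
  let ?\<gamma> = "density (\<nu> \<Otimes>\<^sub>M \<mu>) g"
  have sets_\<gamma>: "sets ?\<gamma> = sets borel"
    using sets_pair_measure_borel[OF sets] by simp
  have "g \<in> borel_measurable (\<nu> \<Otimes>\<^sub>M \<mu>)"
    using g by (simp add: measurable_cong_sets[OF sets_pair_measure_borel[OF sets] refl])
  then have fst: "distr ?\<gamma> \<nu> fst = density \<nu> (\<lambda>x. \<integral>\<^sup>+y. g (x, y) \<partial>\<mu>)"
    and snd: "distr ?\<gamma> \<mu> snd = \<mu>"
    using distr_fst_density distr_snd_density by (simp_all add: normalized density_1)
  have "emeasure ?\<gamma> (space ?\<gamma>) = emeasure (distr ?\<gamma> \<mu> snd) (space \<mu>)"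
    by (subst emeasure_distr) (auto simp: space_pair_measure intro!: arg_cong2[where f=emeasure])
  then have "prob_space ?\<gamma>"
    using snd by (intro prob_spaceI) (simp add: M2.emeasure_space_1)
  moreover have "distr ?\<gamma> borel fst = distr ?\<gamma> \<nu> fst" "distr ?\<gamma> borel snd = distr ?\<gamma> \<mu> snd"
    using sets by (auto intro!: distr_cong)
  ultimately show ?thesis
    using sets_\<gamma> fst snd by (simp add: couplings_def)
qed

lemma product_in_couplings:
  fixes \<nu> \<mu> :: "'a::euclidean_space measure"
  assumes "sets \<nu> = sets borel" "sets \<mu> = sets borel" "prob_space \<nu>" "prob_space \<mu>"
  shows "\<nu> \<Otimes>\<^sub>M \<mu> \<in> couplings \<nu> \<mu>"
  using density_pair_in_couplings[OF assms, of "\<lambda>_. 1"] assms(3,4)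
  by (simp add: density_1 prob_space.emeasure_space_1)

definition transport_cost :: "real \<Rightarrow> ('a::real_normed_vector \<times> 'a) measure \<Rightarrow> ennreal" where
  "transport_cost p \<gamma> = (\<integral>\<^sup>+w. ennreal (norm (fst w - snd w) powr p) \<partial>\<gamma>)"

lemma Wdist_eq_INF_transport_cost:
  "Wdist p \<mu> \<nu> = enn2real (INF \<gamma>\<in>couplings \<mu> \<nu>. transport_cost p \<gamma>) powr (1 / p)"
  by (simp add: Wdist_def transport_cost_def)

lemma borel_measurable_transport_integrand:
  assumes "sets M = sets (borel :: ('a::euclidean_space \<times> 'a) measure)"
  shows "(\<lambda>w. ennreal (norm (fst w - snd w) powr p)) \<in> borel_measurable M"
proof -
  have "(\<lambda>w::'a \<times> 'a. ennreal (norm (fst w - snd w) powr p)) \<in> borel_measurable (borel \<Otimes>\<^sub>M borel)"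
    by measurable
  then show ?thesis
    by (simp only: measurable_cong_sets[OF assms refl] borel_prod)
qed

lemma norm_diff_powr_le:
  fixes x y :: "'a::real_normed_vector"
  assumes "p \<ge> 0"
  shows "norm (x - y) powr p \<le> 2 powr p * (norm x powr p + norm y powr p)"
proof -
  have "norm (x - y) powr p \<le> (2 * max (norm x) (norm y)) powr p"
    using assms norm_triangle_ineq4[of x y] by (intro powr_mono2) auto
  also have "\<dots> = 2 powr p * max (norm x) (norm y) powr p"
    by (simp add: powr_mult)
  also have "max (norm x) (norm y) powr p \<le> norm x powr p + norm y powr p"
    by (simp add: max_def)
  finally show ?thesis
    by (simp add: mult_left_mono)
qed

lemma transport_cost_product_finite:
  fixes \<nu> \<mu> :: "'a::euclidean_space measure"
  assumes "\<nu> \<in> Wspace p" "\<mu> \<in> Wspace p" "p \<ge> 0"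
  shows "transport_cost p (\<nu> \<Otimes>\<^sub>M \<mu>) < \<infinity>"
proof -
  have sets: "sets \<nu> = sets borel" "sets \<mu> = sets borel"
    and moments: "(\<integral>\<^sup>+x. ennreal (norm x powr p) \<partial>\<nu>) < \<infinity>" "(\<integral>\<^sup>+x. ennreal (norm x powr p) \<partial>\<mu>) < \<infinity>"
    and prob: "prob_space \<nu>" "prob_space \<mu>"
    using assms by (auto simp: Wspace_def)
  interpret pair_prob_space \<nu> \<mu>
    using prob by (rule pair_prob_spaceI)
  have [measurable]:
      "(\<lambda>x. norm x powr p) \<in> borel_measurable \<nu>" "(\<lambda>x. norm x powr p) \<in> borel_measurable \<mu>"
    by (simp_all add: measurable_cong_sets[OF sets(1) refl] measurable_cong_sets[OF sets(2) refl])
  have fst: "(\<integral>\<^sup>+w. ennreal (norm (fst w) powr p) \<partial>(\<nu> \<Otimes>\<^sub>M \<mu>)) = (\<integral>\<^sup>+x. ennreal (norm x powr p) \<partial>\<nu>)"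
    by (subst M2.nn_integral_fst[symmetric]) (simp_all add: M2.emeasure_space_1)
  have snd: "(\<integral>\<^sup>+w. ennreal (norm (snd w) powr p) \<partial>(\<nu> \<Otimes>\<^sub>M \<mu>)) = (\<integral>\<^sup>+y. ennreal (norm y powr p) \<partial>\<mu>)"
    by (subst nn_integral_snd[symmetric]) (simp_all add: M1.emeasure_space_1)
  have "transport_cost p (\<nu> \<Otimes>\<^sub>M \<mu>)
      \<le> (\<integral>\<^sup>+w. ennreal (2 powr p) * (ennreal (norm (fst w) powr p) + ennreal (norm (snd w) powr p))
          \<partial>(\<nu> \<Otimes>\<^sub>M \<mu>))"
    unfolding transport_cost_def using norm_diff_powr_le[OF assms(3)]
    by (intro nn_integral_mono)
      (simp add: ennreal_mult[symmetric] ennreal_plus[symmetric] del: ennreal_plus)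
  also have "\<dots> = ennreal (2 powr p)
      * ((\<integral>\<^sup>+x. ennreal (norm x powr p) \<partial>\<nu>) + (\<integral>\<^sup>+y. ennreal (norm y powr p) \<partial>\<mu>))"
    by (simp add: nn_integral_cmult nn_integral_add fst snd)
  also have "\<dots> < \<infinity>"
    using moments by (simp add: ennreal_mult_less_top)
  finally show ?thesis .
qed

lemma Wdist_less_if_transport_cost_less:
  assumes "p > 0" "e > 0" "\<gamma> \<in> couplings q \<mu>" "transport_cost p \<gamma> < ennreal (e powr p)"
  shows "Wdist p q \<mu> < e"
proof -
  let ?I = "INF \<gamma>\<in>couplings q \<mu>. transport_cost p \<gamma>"
  have "?I \<le> transport_cost p \<gamma>"
    using assms(3) by (rule INF_lower)
  then have I: "?I < ennreal (e powr p)"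
    using assms(4) by (rule order.strict_trans1)
  then have "?I < top"
    using ennreal_less_top[of "e powr p"] by (rule order.strict_trans)
  then have "enn2real ?I < e powr p"
    using I by (simp only: enn2real_less_iff[OF \<open>?I < top\<close>])
  then have "enn2real ?I powr (1 / p) < (e powr p) powr (1 / p)"
    using assms(1) by (intro powr_less_mono2) auto
  then show ?thesis
    using assms(1,2) by (simp add: Wdist_eq_INF_transport_cost powr_powr)
qed

lemma Wdist_ge_if_transport_cost_ge:
  fixes q \<mu> :: "'a::euclidean_space measure"
  assumes "p > 0" "q \<in> Wspace p" "\<mu> \<in> Wspace p" "L \<ge> 0"
    and "\<And>\<gamma>. \<gamma> \<in> couplings q \<mu> \<Longrightarrow> ennreal L \<le> transport_cost p \<gamma>"
  shows "L powr (1 / p) \<le> Wdist p q \<mu>"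
proof -
  let ?I = "INF \<gamma>\<in>couplings q \<mu>. transport_cost p \<gamma>"
  \<comment> \<open>The infimum must be finite here: \<open>enn2real\<close> would send \<open>\<infinity>\<close> to \<open>0\<close>.\<close>
  have "?I \<le> transport_cost p (q \<Otimes>\<^sub>M \<mu>)"
    using assms(2,3) by (intro INF_lower product_in_couplings) (auto simp: Wspace_def)
  also have "\<dots> < \<infinity>"
    using assms(1-3) by (intro transport_cost_product_finite) auto
  finally have "?I < top"
    by (simp only: infinity_ennreal_def)
  moreover have "ennreal L \<le> ?I"
    using assms(5) by (rule INF_greatest)
  ultimately have "enn2real (ennreal L) \<le> enn2real ?I"
    by (intro enn2real_mono)
  then have "L \<le> enn2real ?I"
    by (simp only: enn2real_ennreal[OF assms(4)])
  then show ?thesis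
    using assms(1,4) by (simp add: Wdist_eq_INF_transport_cost powr_mono2)
qed

section \<open>Support\<close>

lemma closed_supp: "closed (supp \<mu>)"
  unfolding supp_def by (rule closed_Inter) auto

lemma AE_in_supp:
  fixes \<mu> :: "'a::euclidean_space measure"
  assumes sets: "sets \<mu> = sets borel"
  shows "AE x in \<mu>. x \<in> supp \<mu>"
proof -
  have space: "space \<mu> = UNIV"
    using space_eq_UNIV_if_sets_borel[OF sets] .
  define \<F> where "\<F> = uminus ` {C. closed C \<and> emeasure \<mu> (space \<mu> - C) = 0}"
  \<comment> \<open>By Lindelof, the union of the open null sets is a countable union.\<close>
  obtain \<F>' where \<F>': "\<F>' \<subseteq> \<F>" "countable \<F>'" "\<Union>\<F>' = \<Union>\<F>"
    using Lindelof[of \<F>] by (auto simp: \<F>_def)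
  have "\<Union>\<F>' \<in> null_sets \<mu>"
  proof (rule null_sets_UN'[OF \<F>'(2), of id, simplified])
    fix S assume "S \<in> \<F>'"
    then obtain C where "closed C" "emeasure \<mu> (space \<mu> - C) = 0" "S = - C"
      using \<F>'(1) by (auto simp: \<F>_def)
    then show "S \<in> null_sets \<mu>"
      using sets space by (auto simp: null_sets_def Compl_eq_Diff_UNIV)
  qed
  moreover have "- supp \<mu> = \<Union>\<F>'"
    unfolding \<F>'(3) supp_def \<F>_def by auto
  ultimately show ?thesis
    by (intro AE_I'[of "- supp \<mu>"]) (auto simp: space)
qed

lemma emeasure_ball_pos_if_in_supp:
  fixes \<nu> :: "'a::euclidean_space measure"
  assumes sets: "sets \<nu> = sets borel" and "z \<in> supp \<nu>" "r > 0"
  shows "0 < emeasure \<nu> (ball z r)"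
proof (rule ccontr)
  assume "\<not> 0 < emeasure \<nu> (ball z r)"
  then have "emeasure \<nu> (space \<nu> - (- ball z r)) = 0"
    using space_eq_UNIV_if_sets_borel[OF sets] by (simp add: Diff_eq)
  then have "supp \<nu> \<subseteq> - ball z r"
    unfolding supp_def by (intro Inter_lower) auto
  with assms(2,3) show False
    by (metis ComplD centre_in_ball subsetD)
qed

lemma supp_subsetI:
  assumes "\<And>C. closed C \<Longrightarrow> emeasure \<nu> (space \<nu> - C) = 0 \<Longrightarrow> emeasure \<mu> (space \<mu> - C) = 0"
  shows "supp \<mu> \<subseteq> supp \<nu>"
  using assms unfolding supp_def by blast

section \<open>Necessity of the support condition\<close>

lemma null_compl_closedI:
  fixes \<mu> :: "'a::euclidean_space measure"
  assumes sets: "sets \<mu> = sets borel" and C: "closed C" "C \<noteq> {}"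
    and far_null: "\<And>r. r > 0 \<Longrightarrow> emeasure \<mu> {y. r < infdist y C} = 0"
  shows "emeasure \<mu> (space \<mu> - C) = 0"
proof -
  define U where "U n = {y. 1 / real (Suc n) < infdist y C}" for n
  have "space \<mu> - C = (\<Union>n. U n)"
  proof (intro set_eqI iffI)
    fix y assume "y \<in> space \<mu> - C"
    then have "0 < infdist y C"
      using C by (intro infdist_pos_not_in_closed) auto
    then obtain n where "1 / real (Suc n) < infdist y C"
      by (rule nat_approx_posE)
    then show "y \<in> (\<Union>n. U n)"
      by (auto simp: U_def)
  next
    fix y assume "y \<in> (\<Union>n. U n)"
    then have "y \<notin> C"
      by (force simp: U_def)
    then show "y \<in> space \<mu> - C"
      by (simp add: space_eq_UNIV_if_sets_borel[OF sets])
  qed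
  moreover have "U n \<in> null_sets \<mu>" for n
  proof -
    have "open (U n)"
      unfolding U_def by (intro open_Collect_less continuous_intros)
    then show ?thesis
      using far_null[of "1 / real (Suc n)"] sets by (simp add: U_def null_sets_def borel_open)
  qed
  then have "(\<Union>n. U n) \<in> null_sets \<mu>"
    by (rule null_sets_UN)
  ultimately show ?thesis
    by (simp add: null_sets_def)
qed

lemma transport_cost_ge_mass_far_from:
  fixes q \<mu> :: "'a::euclidean_space measure"
  assumes \<gamma>: "\<gamma> \<in> couplings q \<mu>" and "closed C" and null: "emeasure q (space q - C) = 0"
    and "r \<ge> 0" "p > 0"
  shows "ennreal (r powr p) * emeasure \<mu> {y. r < infdist y C} \<le> transport_cost p \<gamma>"
proof -
  define U where "U = {y. r < infdist y C}"
  have sets: "sets \<gamma> = sets borel" and fst: "distr \<gamma> borel fst = q" and snd: "distr \<gamma> borel snd = \<mu>"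
    using \<gamma> by (auto simp: couplings_def)
  have space: "space \<gamma> = UNIV" "space q = UNIV"
    using space_eq_UNIV_if_sets_borel[OF sets] by (auto simp: fst[symmetric])
  have meas: "fst \<in> measurable \<gamma> borel" "snd \<in> measurable \<gamma> borel"
    by (simp_all add: measurable_cong_sets[OF sets refl] borel_prod[symmetric])
  have U: "U \<in> sets borel"
    unfolding U_def by (intro borel_open open_Collect_less continuous_intros)
  have C: "- C \<in> sets borel"
    using assms(2) by (simp add: borel_open open_Compl)
  have CU: "C \<times> U \<in> sets \<gamma>"
    using U assms(2) by (simp add: sets borel_prod[symmetric])
  have far_C: "fst -` (- C) \<in> sets \<gamma>"
    using measurable_sets[OF meas(1) C] space by simp
  have "emeasure \<mu> U = emeasure \<gamma> (snd -` U)"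
    using U meas by (simp add: snd[symmetric] emeasure_distr space)
  also have "\<dots> \<le> emeasure \<gamma> (C \<times> U \<union> fst -` (- C))"
    using CU far_C by (intro emeasure_mono) auto
  also have "\<dots> \<le> emeasure \<gamma> (C \<times> U) + emeasure \<gamma> (fst -` (- C))"
    using CU far_C by (rule emeasure_subadditive)
  also have "emeasure \<gamma> (fst -` (- C)) = 0"
    using C meas null by (simp add: fst[symmetric] emeasure_distr space Compl_eq_Diff_UNIV)
  finally have "ennreal (r powr p) * emeasure \<mu> U
      \<le> (\<integral>\<^sup>+w. ennreal (r powr p) * indicator (C \<times> U) w \<partial>\<gamma>)"
    using CU by (simp add: nn_integral_cmult_indicator mult_left_mono)
  also have "\<dots> \<le> transport_cost p \<gamma>"
    unfolding transport_cost_def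
  proof (intro nn_integral_mono)
    fix w :: "'a \<times> 'a"
    show "ennreal (r powr p) * indicator (C \<times> U) w \<le> ennreal (norm (fst w - snd w) powr p)"
    proof (cases "w \<in> C \<times> U")
      case True
      then have "r < dist (snd w) (fst w)"
        using infdist_le[of "fst w" C "snd w"] by (auto simp: U_def)
      then show ?thesis
        using True assms(4,5) by (simp add: dist_norm norm_minus_commute powr_mono2)
    qed simp
  qed
  finally show ?thesis
    unfolding U_def .
qed

lemma Wdist_Qinf_ge_mass_far_from:
  fixes \<nu> \<mu> :: "'a::euclidean_space measure"
  assumes "p > 0" "r > 0" and sets: "sets \<nu> = sets borel" and "closed C"
    and null: "emeasure \<nu> (space \<nu> - C) = 0"
    and q: "q \<in> Qinf \<nu> \<inter> Wspace p" and \<mu>: "\<mu> \<in> Wspace p"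
  shows "(r powr p * measure \<mu> {y. r < infdist y C}) powr (1 / p) \<le> Wdist p q \<mu>"
proof -
  obtain f where "f \<in> borel_measurable borel" and q_def: "q = density \<nu> f"
    using q by (auto simp: Qinf_def)
  then have "f \<in> borel_measurable \<nu>"
    by (simp add: measurable_cong_sets[OF sets refl])
  moreover have "space \<nu> - C \<in> null_sets \<nu>"
    using null \<open>closed C\<close> sets
    by (simp add: null_sets_def space_eq_UNIV_if_sets_borel borel_open open_Diff)
  ultimately have "space \<nu> - C \<in> null_sets q"
    using absolutely_continuousI_density unfolding q_def absolutely_continuous_def by blast
  then have null_q: "emeasure q (space q - C) = 0"
    unfolding q_def space_density by (rule null_setsD1)
  interpret \<mu>: prob_space \<mu>
    using \<mu> by (simp add: Wspace_def)
  have "ennreal (r powr p * measure \<mu> {y. r < infdist y C}) \<le> transport_cost p \<gamma>"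
    if "\<gamma> \<in> couplings q \<mu>" for \<gamma>
    using transport_cost_ge_mass_far_from[OF that \<open>closed C\<close> null_q, of r p] assms(1,2)
    by (simp add: ennreal_mult \<mu>.emeasure_eq_measure)
  then show ?thesis
    using assms(1) q \<mu> by (intro Wdist_ge_if_transport_cost_ge) auto
qed

lemma supp_subset_if_in_Wclosure:
  fixes \<nu> \<mu> :: "'a::euclidean_space measure"
  assumes "p > 0" and sets: "sets \<nu> = sets borel" and "prob_space \<nu>"
    and \<mu>: "\<mu> \<in> Wclosure p (Qinf \<nu>)"
  shows "supp \<mu> \<subseteq> supp \<nu>"
proof (rule supp_subsetI)
  fix C :: "'a set" assume C: "closed C" and null: "emeasure \<nu> (space \<nu> - C) = 0"
  have \<mu>_Wspace: "\<mu> \<in> Wspace p"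
    and approx: "\<And>e. e > 0 \<Longrightarrow> \<exists>q\<in>Qinf \<nu> \<inter> Wspace p. Wdist p q \<mu> < e"
    using \<mu> by (auto simp: Wclosure_def)
  then interpret \<mu>: prob_space \<mu>
    by (simp add: Wspace_def)
  have "C \<noteq> {}"
    using null \<open>prob_space \<nu>\<close> prob_space.emeasure_space_1 by fastforce
  show "emeasure \<mu> (space \<mu> - C) = 0"
  proof (rule null_compl_closedI[OF _ C \<open>C \<noteq> {}\<close>])
    show "sets \<mu> = sets borel"
      using \<mu>_Wspace by (simp add: Wspace_def)
    fix r :: real assume "r > 0"
    let ?m = "measure \<mu> {y. r < infdist y C}"
    show "emeasure \<mu> {y. r < infdist y C} = 0"
    proof (rule ccontr)
      assume "emeasure \<mu> {y. r < infdist y C} \<noteq> 0"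
      then have "0 < (r powr p * ?m) powr (1 / p)"
        using \<open>r > 0\<close> by (simp add: \<mu>.emeasure_eq_measure zero_less_measure_iff)
      then obtain q where "q \<in> Qinf \<nu> \<inter> Wspace p" "Wdist p q \<mu> < (r powr p * ?m) powr (1 / p)"
        using approx by blast
      with Wdist_Qinf_ge_mass_far_from[OF \<open>p > 0\<close> \<open>r > 0\<close> sets C null _ \<mu>_Wspace] show False
        by fastforce
    qed
  qed
qed

section \<open>Sufficiency: approximation by bounded densities\<close>

lemma measurable_partition_of_unity:
  assumes "finite Z" and [measurable]: "W \<in> sets M" "\<And>z. B z \<in> sets M"
    and cover: "W \<subseteq> (\<Union>z\<in>Z. B z)"
  obtains a :: "'b \<Rightarrow> 'a \<Rightarrow> real" where
    "\<And>z. a z \<in> borel_measurable M" "\<And>z y. 0 \<le> a z y" "\<And>z y. a z y \<le> 1"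
    "\<And>z y. a z y \<noteq> 0 \<Longrightarrow> y \<in> W \<inter> B z" "\<And>y. (\<Sum>z\<in>Z. a z y) = indicator W y"
proof
  define N where "N y = (\<Sum>z\<in>Z. indicator (B z) y :: real)" for y
  define a where "a z y = indicator W y * indicator (B z) y / N y" for z y
  have N_ge_1: "1 \<le> N y" if y: "y \<in> W" for y
  proof -
    obtain z where "z \<in> Z" "y \<in> B z"
      using cover y by auto
    then show ?thesis
      unfolding N_def using member_le_sum[of z Z "\<lambda>z. indicator (B z) y :: real"] \<open>finite Z\<close>
      by simp
  qed
  show "a z \<in> borel_measurable M" for z
    unfolding a_def N_def by measurable
  show "0 \<le> a z y" for z y
    unfolding a_def N_def by (simp add: sum_nonneg)
  show "a z y \<le> 1" for z y
    using N_ge_1[of y] by (auto simp: a_def indicator_def divide_le_eq_1)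
  show "y \<in> W \<inter> B z" if "a z y \<noteq> 0" for z y
    using that by (auto simp: a_def indicator_def split: if_splits)
  show "(\<Sum>z\<in>Z. a z y) = indicator W y" for y
    using N_ge_1[of y]
    by (cases "y \<in> W") (simp_all add: a_def N_def[symmetric] sum_divide_distrib[symmetric])
qed

lemma nn_integral_normalized_indicator:
  assumes "finite_measure M" "B \<in> sets M" "0 < emeasure M B" "0 \<le> c"
  shows "(\<integral>\<^sup>+x. ennreal (c / measure M B) * indicator B x \<partial>M) = ennreal c"
proof -
  have "emeasure M B = ennreal (measure M B)" "0 < measure M B"
    using assms by (simp_all add: finite_measure.emeasure_eq_measure)
  then show ?thesis
    using assms(2,4) by (simp add: nn_integral_cmult_indicator ennreal_mult''[symmetric])
qed

lemma kernel_density_from_cover: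
  fixes \<nu> :: "'a::euclidean_space measure"
  assumes "prob_space \<nu>" and sets: "sets \<nu> = sets borel"
    and "finite Z" and [measurable]: "W \<in> sets borel" "\<And>z. B z \<in> sets borel"
    and cover: "W \<subseteq> (\<Union>z\<in>Z. B z)" and pos: "\<And>z. z \<in> Z \<Longrightarrow> 0 < emeasure \<nu> (B z)"
  obtains g :: "'a \<times> 'a \<Rightarrow> ennreal" and C :: real where
    "g \<in> borel_measurable borel" "\<And>w. g w \<le> ennreal C"
    "\<And>y. (\<integral>\<^sup>+x. g (x, y) \<partial>\<nu>) = 1"
    "\<And>x y. y \<notin> W \<Longrightarrow> g (x, y) = 1"
    "\<And>x y. y \<in> W \<Longrightarrow> g (x, y) \<noteq> 0 \<Longrightarrow> \<exists>z\<in>Z. x \<in> B z \<and> y \<in> B z"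
proof -
  interpret prob_space \<nu>
    by fact
  obtain a :: "'b \<Rightarrow> 'a \<Rightarrow> real" where [measurable]: "\<And>z. a z \<in> borel_measurable borel"
    and a: "\<And>z y. 0 \<le> a z y" "\<And>z y. a z y \<le> 1" "\<And>z y. a z y \<noteq> 0 \<Longrightarrow> y \<in> W \<inter> B z"
    and a_sum: "\<And>y. (\<Sum>z\<in>Z. a z y) = indicator W y"
    using measurable_partition_of_unity[OF \<open>finite Z\<close> assms(4,5) cover] by blast
  define m where "m z = measure \<nu> (B z)" for z
  have m_pos: "0 < m z" if "z \<in> Z" for z
    using pos[OF that] by (simp add: m_def emeasure_eq_measure)
  \<comment> \<open>The mass at \<open>y \<in> W\<close> is spread over the normalised restrictions of \<open>\<nu>\<close> to the sets \<open>B z\<close>,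
    weighted by the partition of unity; the mass at \<open>y \<notin> W\<close> is spread over \<open>\<nu>\<close>.\<close>
  define g where "g w = (\<Sum>z\<in>Z. ennreal (a z (snd w) / m z) * indicator (B z) (fst w))
    + indicator (- W) (snd w)" for w :: "'a \<times> 'a"
  show ?thesis
  proof
    have "g \<in> borel_measurable (borel \<Otimes>\<^sub>M borel)"
      unfolding g_def by measurable
    then show "g \<in> borel_measurable borel"
      by (simp only: borel_prod)
  next
    fix w :: "'a \<times> 'a"
    have "g w \<le> (\<Sum>z\<in>Z. ennreal (1 / m z)) + 1"
      unfolding g_def using a m_pos
      by (intro add_mono sum_mono)
        (auto simp: indicator_def less_imp_le intro!: ennreal_leI divide_right_mono)
    also have "\<dots> = ennreal ((\<Sum>z\<in>Z. 1 / m z) + 1)"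
      using m_pos by (simp add: sum_nonneg less_imp_le)
    finally show "g w \<le> ennreal ((\<Sum>z\<in>Z. 1 / m z) + 1)" .
  next
    fix y
    have "(\<integral>\<^sup>+x. g (x, y) \<partial>\<nu>) = (\<Sum>z\<in>Z. ennreal (a z y)) + indicator (- W) y"
      using sets a(1) pos
      by (simp add: g_def m_def nn_integral_add nn_integral_sum nn_integral_normalized_indicator
          emeasure_space_1)
    also have "\<dots> = 1"
      using a(1) by (simp add: a_sum indicator_def)
    finally show "(\<integral>\<^sup>+x. g (x, y) \<partial>\<nu>) = 1" .
  next
    fix x y assume "y \<notin> W"
    then have "a z y = 0" for z
      using a(3) by blast
    with \<open>y \<notin> W\<close> show "g (x, y) = 1"
      by (simp add: g_def)
  next
    fix x y assume "y \<in> W" "g (x, y) \<noteq> 0"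
    then have "(\<Sum>z\<in>Z. ennreal (a z y / m z) * indicator (B z) x) \<noteq> 0"
      by (simp add: g_def)
    then obtain z where "z \<in> Z" "ennreal (a z y / m z) * indicator (B z) x \<noteq> 0"
      by (rule sum.not_neutral_contains_not_neutral)
    then have "a z y \<noteq> 0" "x \<in> B z"
      by (auto simp: indicator_def split: if_splits)
    then show "\<exists>z\<in>Z. x \<in> B z \<and> y \<in> B z"
      using a(3) \<open>z \<in> Z\<close> by blast
  qed
qed

lemma density_bounded_in_Wspace:
  fixes \<nu> :: "'a::euclidean_space measure"
  assumes \<nu>: "\<nu> \<in> Wspace p" and "prob_space (density \<nu> f)"
    and f: "f \<in> borel_measurable borel" and bounded: "\<And>x. f x \<le> ennreal C"
  shows "density \<nu> f \<in> Wspace p"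
proof -
  have sets: "sets \<nu> = sets borel" and moment: "(\<integral>\<^sup>+x. ennreal (norm x powr p) \<partial>\<nu>) < \<infinity>"
    using \<nu> by (auto simp: Wspace_def)
  have meas: "f \<in> borel_measurable \<nu>" "(\<lambda>x. ennreal (norm x powr p)) \<in> borel_measurable \<nu>"
    using f by (simp_all add: measurable_cong_sets[OF sets refl])
  have "(\<integral>\<^sup>+x. ennreal (norm x powr p) \<partial>density \<nu> f) = (\<integral>\<^sup>+x. f x * ennreal (norm x powr p) \<partial>\<nu>)"
    using meas by (rule nn_integral_density)
  also have "\<dots> \<le> (\<integral>\<^sup>+x. ennreal C * ennreal (norm x powr p) \<partial>\<nu>)"
    using bounded by (intro nn_integral_mono mult_right_mono) auto
  also have "\<dots> = ennreal C * (\<integral>\<^sup>+x. ennreal (norm x powr p) \<partial>\<nu>)"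
    using meas(2) by (rule nn_integral_cmult)
  also have "\<dots> < \<infinity>"
    using moment by (simp add: ennreal_mult_less_top)
  finally show ?thesis
    using sets \<open>prob_space (density \<nu> f)\<close> by (simp add: Wspace_def)
qed

lemma Qinf_Wdist_less_if_kernel_cost_less:
  fixes \<nu> \<mu> :: "'a::euclidean_space measure"
  assumes "p > 0" "e > 0" and \<nu>: "\<nu> \<in> Wspace p" and \<mu>: "\<mu> \<in> Wspace p"
    and g: "g \<in> borel_measurable borel" "\<And>w. g w \<le> ennreal C" "\<And>y. (\<integral>\<^sup>+x. g (x, y) \<partial>\<nu>) = 1"
    and cost: "(\<integral>\<^sup>+w. g w * ennreal (norm (fst w - snd w) powr p) \<partial>(\<nu> \<Otimes>\<^sub>M \<mu>)) < ennreal (e powr p)"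
  shows "\<exists>q\<in>Qinf \<nu> \<inter> Wspace p. Wdist p q \<mu> < e"
proof -
  have sets: "sets \<nu> = sets borel" "sets \<mu> = sets borel" and prob: "prob_space \<nu>" "prob_space \<mu>"
    using \<nu> \<mu> by (auto simp: Wspace_def)
  interpret pair_prob_space \<nu> \<mu>
    using prob by (rule pair_prob_spaceI)
  define f where "f x = (\<integral>\<^sup>+y. g (x, y) \<partial>\<mu>)" for x
  define q where "q = density \<nu> f"
  define \<gamma> where "\<gamma> = density (\<nu> \<Otimes>\<^sub>M \<mu>) g"
  have \<gamma>: "\<gamma> \<in> couplings q \<mu>"
    unfolding \<gamma>_def q_def f_def using sets prob g(1,3) by (rule density_pair_in_couplings)
  then have sets_\<gamma>: "sets \<gamma> = sets borel" and "prob_space \<gamma>" and fst: "distr \<gamma> borel fst = q"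
    by (simp_all add: couplings_def)
  have "fst \<in> measurable \<gamma> borel"
    by (simp add: measurable_cong_sets[OF sets_\<gamma> refl] borel_prod[symmetric])
  then have "prob_space q"
    using prob_space.prob_space_distr[OF \<open>prob_space \<gamma>\<close>] fst by blast
  have g_meas: "g \<in> borel_measurable (\<nu> \<Otimes>\<^sub>M \<mu>)"
    using g(1) by (simp add: measurable_cong_sets[OF sets_pair_measure_borel[OF sets] refl])
  have "g \<in> borel_measurable (borel \<Otimes>\<^sub>M \<mu>)"
    using g(1) by (simp add: measurable_cong_sets[OF sets_pair_measure_borel[OF refl sets(2)] refl])
  then have f_meas: "f \<in> borel_measurable borel"
    unfolding f_def using M2.borel_measurable_nn_integral[of "\<lambda>x y. g (x, y)" borel] by simp
  have f_bounded: "f x \<le> ennreal C" for x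
    using nn_integral_mono[of \<mu> "\<lambda>y. g (x, y)" "\<lambda>_. ennreal C"] g(2)
    by (simp add: f_def M2.emeasure_space_1)
  have "q \<in> Qinf \<nu>"
    using \<open>prob_space q\<close> f_meas f_bounded by (auto simp: Qinf_def q_def)
  moreover have "q \<in> Wspace p"
    using \<nu> \<open>prob_space q\<close> f_meas f_bounded unfolding q_def by (rule density_bounded_in_Wspace)
  moreover have "transport_cost p \<gamma> < ennreal (e powr p)"
    using cost g_meas borel_measurable_transport_integrand[OF sets_pair_measure_borel[OF sets]]
    by (simp add: transport_cost_def \<gamma>_def nn_integral_density)
  then have "Wdist p q \<mu> < e"
    using \<open>p > 0\<close> \<open>e > 0\<close> \<gamma> by (intro Wdist_less_if_transport_cost_less)
  ultimately show ?thesis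
    by blast
qed

lemma nn_integral_outside_cball_less:
  fixes M :: "'a::euclidean_space measure"
  assumes sets: "sets M = sets borel" and [measurable]: "f \<in> borel_measurable M"
    and finite: "(\<integral>\<^sup>+x. f x \<partial>M) < \<infinity>" and "e > 0"
  obtains R where "(\<integral>\<^sup>+x. f x * indicator (- cball 0 R) x \<partial>M) < e"
proof -
  define F where "F n x = f x * indicator (- cball 0 (real n)) x" for n x
  have [measurable]: "- cball 0 (real n) \<in> sets M" for n :: nat
    using sets by (simp add: borel_open)
  have [measurable]: "F n \<in> borel_measurable M" for n
    unfolding F_def by measurable
  have "AE x in M. F (Suc n) x \<le> F n x" for n
    by (intro AE_I2) (auto simp: F_def split: split_indicator)
  moreover have "(\<integral>\<^sup>+x. F 0 x \<partial>M) < \<infinity>"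
    using finite by (rule le_less_trans[rotated])
      (auto simp: F_def intro!: nn_integral_mono split: split_indicator)
  ultimately have "(INF n. \<integral>\<^sup>+x. F n x \<partial>M) = (\<integral>\<^sup>+x. (INF n. F n x) \<partial>M)"
    by (intro nn_integral_monotone_convergence_INF_AE'[symmetric]) auto
  also have "\<dots> = 0"
  proof -
    have "(INF n. F n x) = 0" for x
    proof -
      obtain n where "norm x \<le> real n"
        using real_arch_simple by blast
      then have "(INF n. F n x) \<le> 0"
        using INF_lower[of n UNIV "\<lambda>n. F n x"] by (simp add: F_def)
      then show ?thesis
        by simp
    qed
    then show ?thesis
      by simp
  qed
  finally have "(INF n. \<integral>\<^sup>+x. F n x \<partial>M) < e"
    using \<open>e > 0\<close> by simp
  then obtain n where "(\<integral>\<^sup>+x. F n x \<partial>M) < e"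
    by (auto simp: INF_less_iff)
  then show thesis
    by (intro that[of "real n"]) (simp add: F_def)
qed

lemma kernel_transport_cost_le:
  fixes \<nu> \<mu> :: "'a::euclidean_space measure"
  assumes sets: "sets \<nu> = sets borel" "sets \<mu> = sets borel" and prob: "prob_space \<nu>" "prob_space \<mu>"
    and g: "g \<in> borel_measurable borel" "\<And>y. (\<integral>\<^sup>+x. g (x, y) \<partial>\<nu>) = 1"
    and W: "W \<in> sets borel" "\<And>x y. y \<notin> W \<Longrightarrow> g (x, y) = 1"
    and near: "\<And>x y. y \<in> W \<Longrightarrow> g (x, y) \<noteq> 0 \<Longrightarrow> dist x y \<le> s" and "p \<ge> 0"
  shows "(\<integral>\<^sup>+w. g w * ennreal (norm (fst w - snd w) powr p) \<partial>(\<nu> \<Otimes>\<^sub>M \<mu>))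
    \<le> ennreal (s powr p) + (\<integral>\<^sup>+y. indicator (- W) y * (\<integral>\<^sup>+x. ennreal (norm (x - y) powr p) \<partial>\<nu>) \<partial>\<mu>)"
proof -
  interpret pair_prob_space \<nu> \<mu>
    using prob by (rule pair_prob_spaceI)
  define c where "c w = ennreal (norm (fst w - snd w) powr p)" for w :: "'a \<times> 'a"
  have sets_pair: "sets (\<nu> \<Otimes>\<^sub>M \<mu>) = sets borel"
    using sets by (rule sets_pair_measure_borel)
  have [measurable]: "g \<in> borel_measurable (\<nu> \<Otimes>\<^sub>M \<mu>)" "- W \<in> sets \<mu>"
    using g(1) W(1) sets by (simp_all add: measurable_cong_sets[OF sets_pair refl])
  have [measurable]: "c \<in> borel_measurable (\<nu> \<Otimes>\<^sub>M \<mu>)"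
    unfolding c_def by (rule borel_measurable_transport_integrand[OF sets_pair])
  have pointwise: "g w * c w \<le> ennreal (s powr p) * g w + indicator (- W) (snd w) * c w" for w
  proof (cases "snd w \<in> W \<and> g w \<noteq> 0")
    case True
    then have "dist (fst w) (snd w) \<le> s"
      using near[of "snd w" "fst w"] by simp
    then have "c w \<le> ennreal (s powr p)"
      using \<open>p \<ge> 0\<close> by (simp add: c_def dist_norm powr_mono2)
    then have "g w * c w \<le> g w * ennreal (s powr p)"
      by (rule mult_left_mono) simp
    then show ?thesis
      by (simp add: mult.commute add_increasing2)
  next
    case False
    then show ?thesis
      using W(2)[of "snd w" "fst w"] by (cases "snd w \<in> W") auto
  qed
  have g_total: "(\<integral>\<^sup>+w. g w \<partial>(\<nu> \<Otimes>\<^sub>M \<mu>)) = 1"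
    using nn_integral_snd[of g] g(2) by (simp add: M2.emeasure_space_1)
  have far_meas: "(\<lambda>w. indicator (- W) (snd w) * c w) \<in> borel_measurable (\<nu> \<Otimes>\<^sub>M \<mu>)"
    by measurable
  have "(\<lambda>x. ennreal (norm (x - y) powr p)) \<in> borel_measurable \<nu>" for y
    unfolding measurable_cong_sets[OF sets(1) refl] by measurable
  then have far: "(\<integral>\<^sup>+w. indicator (- W) (snd w) * c w \<partial>(\<nu> \<Otimes>\<^sub>M \<mu>))
      = (\<integral>\<^sup>+y. indicator (- W) y * (\<integral>\<^sup>+x. ennreal (norm (x - y) powr p) \<partial>\<nu>) \<partial>\<mu>)"
    using nn_integral_snd[OF far_meas] by (simp add: c_def nn_integral_cmult)
  have "(\<integral>\<^sup>+w. g w * c w \<partial>(\<nu> \<Otimes>\<^sub>M \<mu>))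
      \<le> (\<integral>\<^sup>+w. ennreal (s powr p) * g w + indicator (- W) (snd w) * c w \<partial>(\<nu> \<Otimes>\<^sub>M \<mu>))"
    by (intro nn_integral_mono pointwise)
  also have "\<dots> = ennreal (s powr p) * (\<integral>\<^sup>+w. g w \<partial>(\<nu> \<Otimes>\<^sub>M \<mu>))
      + (\<integral>\<^sup>+w. indicator (- W) (snd w) * c w \<partial>(\<nu> \<Otimes>\<^sub>M \<mu>))"
    using far_meas by (subst nn_integral_add) (auto simp: nn_integral_cmult)
  finally show ?thesis
    unfolding g_total far by (simp add: c_def)
qed

lemma transport_cost_outside_cball_less:
  fixes \<nu> \<mu> :: "'a::euclidean_space measure"
  assumes "p \<ge> 0" and \<nu>: "\<nu> \<in> Wspace p" and \<mu>: "\<mu> \<in> Wspace p" and "e > 0"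
  obtains R where
    "(\<integral>\<^sup>+y. (\<integral>\<^sup>+x. ennreal (norm (x - y) powr p) \<partial>\<nu>) * indicator (- cball 0 R) y \<partial>\<mu>) < e"
proof -
  have sets: "sets \<nu> = sets borel" "sets \<mu> = sets borel" and prob: "prob_space \<nu>" "prob_space \<mu>"
    using \<nu> \<mu> by (auto simp: Wspace_def)
  interpret pair_prob_space \<nu> \<mu>
    using prob by (rule pair_prob_spaceI)
  have cost_meas: "(\<lambda>w. ennreal (norm (fst w - snd w) powr p)) \<in> borel_measurable (\<nu> \<Otimes>\<^sub>M \<mu>)"
    by (rule borel_measurable_transport_integrand[OF sets_pair_measure_borel[OF sets]])
  have "(\<lambda>(y, x). ennreal (norm (x - y) powr p)) \<in> borel_measurable (\<mu> \<Otimes>\<^sub>M \<nu>)"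
    using measurable_pair_swap[OF cost_meas] by (simp add: case_prod_beta)
  then have meas: "(\<lambda>y. \<integral>\<^sup>+x. ennreal (norm (x - y) powr p) \<partial>\<nu>) \<in> borel_measurable \<mu>"
    by (rule M1.borel_measurable_nn_integral)
  have "(\<integral>\<^sup>+y. \<integral>\<^sup>+x. ennreal (norm (x - y) powr p) \<partial>\<nu> \<partial>\<mu>) = transport_cost p (\<nu> \<Otimes>\<^sub>M \<mu>)"
    using nn_integral_snd[OF cost_meas] by (simp add: transport_cost_def)
  also have "\<dots> < \<infinity>"
    using \<nu> \<mu> assms(1) by (rule transport_cost_product_finite)
  finally show ?thesis
    using nn_integral_outside_cball_less[OF sets(2) meas _ \<open>e > 0\<close>] that by blast
qed

lemma kernel_density_from_ball_cover:
  fixes \<nu> :: "'a::euclidean_space measure"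
  assumes "prob_space \<nu>" and sets: "sets \<nu> = sets borel"
    and Z: "finite Z" "Z \<subseteq> supp \<nu>" and "\<delta> > 0"
    and W: "W \<in> sets borel" "W \<subseteq> (\<Union>z\<in>Z. ball z \<delta>)"
  obtains g :: "'a \<times> 'a \<Rightarrow> ennreal" and C :: real where
    "g \<in> borel_measurable borel" "\<And>w. g w \<le> ennreal C"
    "\<And>y. (\<integral>\<^sup>+x. g (x, y) \<partial>\<nu>) = 1"
    "\<And>x y. y \<notin> W \<Longrightarrow> g (x, y) = 1"
    "\<And>x y. y \<in> W \<Longrightarrow> g (x, y) \<noteq> 0 \<Longrightarrow> dist x y \<le> 2 * \<delta>"
proof -
  have "0 < emeasure \<nu> (ball z \<delta>)" if "z \<in> Z" for z
    using that Z(2) \<open>\<delta> > 0\<close> by (intro emeasure_ball_pos_if_in_supp[OF sets]) auto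
  then obtain g :: "'a \<times> 'a \<Rightarrow> ennreal" and C where g: "g \<in> borel_measurable borel"
    "\<And>w. g w \<le> ennreal C" "\<And>y. (\<integral>\<^sup>+x. g (x, y) \<partial>\<nu>) = 1" "\<And>x y. y \<notin> W \<Longrightarrow> g (x, y) = 1"
    and near: "\<And>x y. y \<in> W \<Longrightarrow> g (x, y) \<noteq> 0 \<Longrightarrow> \<exists>z\<in>Z. x \<in> ball z \<delta> \<and> y \<in> ball z \<delta>"
    using kernel_density_from_cover[OF assms(1) sets Z(1) W(1) borel_open[OF open_ball] W(2)]
    by blast
  have "dist x y \<le> 2 * \<delta>" if xy: "y \<in> W" "g (x, y) \<noteq> 0" for x y
  proof -
    obtain z where "dist z x < \<delta>" "dist z y < \<delta>"
      using near[OF xy] by auto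
    then show ?thesis
      using dist_triangle2[of x y z] by (simp add: dist_commute)
  qed
  with g that show ?thesis
    by blast
qed

lemma nn_integral_indicator_compl_le:
  fixes \<mu> :: "'a::euclidean_space measure"
  assumes "sets \<mu> = sets borel" and "supp \<mu> \<inter> S \<subseteq> W"
  shows "(\<integral>\<^sup>+y. indicator (- W) y * f y \<partial>\<mu>) \<le> (\<integral>\<^sup>+y. f y * indicator (- S) y \<partial>\<mu>)"
proof (rule nn_integral_mono_AE)
  show "AE y in \<mu>. indicator (- W) y * f y \<le> f y * indicator (- S) y"
    using AE_in_supp[OF assms(1)]
  proof (rule AE_mp, intro AE_I2 impI)
    fix y assume "y \<in> supp \<mu>"
    then show "indicator (- W) y * f y \<le> f y * indicator (- S) y"
      using assms(2) by (auto simp: indicator_def)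
  qed
qed

lemma closed_Int_cball_finite_ball_cover:
  fixes S :: "'a::euclidean_space set"
  assumes "closed S" "\<delta> > 0"
  obtains Z where "finite Z" "Z \<subseteq> S" "S \<inter> cball 0 R \<subseteq> (\<Union>z\<in>Z. ball z \<delta>)"
proof -
  have "compact (S \<inter> cball 0 R)"
    using assms(1) by (intro closed_Int_compact) auto
  then obtain Z where "Z \<subseteq> S \<inter> cball 0 R" "finite Z" "S \<inter> cball 0 R \<subseteq> (\<Union>z\<in>Z. ball z \<delta>)"
    using compactE_image[of "S \<inter> cball 0 R" "S \<inter> cball 0 R" "\<lambda>z. ball z \<delta>"] assms(2) by force
  then show thesis
    using that by blast
qed

lemma exists_Qinf_Wdist_less:
  fixes \<nu> \<mu> :: "'a::euclidean_space measure"
  assumes "p > 0" "e > 0" and \<nu>: "\<nu> \<in> Wspace p" and \<mu>: "\<mu> \<in> Wspace p"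
    and supp: "supp \<mu> \<subseteq> supp \<nu>"
  shows "\<exists>q\<in>Qinf \<nu> \<inter> Wspace p. Wdist p q \<mu> < e"
proof -
  have sets: "sets \<nu> = sets borel" "sets \<mu> = sets borel" and prob: "prob_space \<nu>" "prob_space \<mu>"
    using \<nu> \<mu> by (auto simp: Wspace_def)
  define \<phi> where "\<phi> y = (\<integral>\<^sup>+x. ennreal (norm (x - y) powr p) \<partial>\<nu>)" for y
  have "0 < ennreal (e powr p / 2)"
    using \<open>e > 0\<close> by simp
  then obtain R where tail: "(\<integral>\<^sup>+y. \<phi> y * indicator (- cball 0 R) y \<partial>\<mu>) < ennreal (e powr p / 2)"
    unfolding \<phi>_def by (rule transport_cost_outside_cball_less[OF less_imp_le[OF \<open>p > 0\<close>] \<nu> \<mu>])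
  define \<delta> where "\<delta> = e / 2 * (1 / 2) powr (1 / p)"
  have "\<delta> > 0"
    using \<open>e > 0\<close> by (simp add: \<delta>_def)
  have two_\<delta>: "(2 * \<delta>) powr p = e powr p / 2"
    using \<open>e > 0\<close> \<open>p > 0\<close> by (simp add: \<delta>_def powr_mult powr_powr powr_divide)
  obtain Z where Z: "finite Z" "Z \<subseteq> supp \<mu>" and cover: "supp \<mu> \<inter> cball 0 R \<subseteq> (\<Union>z\<in>Z. ball z \<delta>)"
    using closed_Int_cball_finite_ball_cover[OF closed_supp \<open>\<delta> > 0\<close>] by blast
  define W where "W = cball 0 R \<inter> (\<Union>z\<in>Z. ball z \<delta>)"
  have W_borel: "W \<in> sets borel"
    unfolding W_def using Z(1) by (intro sets.Int borel_closed borel_open) auto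
  have W: "W \<subseteq> (\<Union>z\<in>Z. ball z \<delta>)" "supp \<mu> \<inter> cball 0 R \<subseteq> W"
    unfolding W_def using cover by auto
  obtain g :: "'a \<times> 'a \<Rightarrow> ennreal" and C where g: "g \<in> borel_measurable borel"
    "\<And>w. g w \<le> ennreal C" "\<And>y. (\<integral>\<^sup>+x. g (x, y) \<partial>\<nu>) = 1" "\<And>x y. y \<notin> W \<Longrightarrow> g (x, y) = 1"
    and near: "\<And>x y. y \<in> W \<Longrightarrow> g (x, y) \<noteq> 0 \<Longrightarrow> dist x y \<le> 2 * \<delta>"
    using kernel_density_from_ball_cover[OF prob(1) sets(1) Z(1) _ \<open>\<delta> > 0\<close> W_borel W(1)] Z(2) supp
    by blast
  have "(\<integral>\<^sup>+w. g w * ennreal (norm (fst w - snd w) powr p) \<partial>(\<nu> \<Otimes>\<^sub>M \<mu>))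
      \<le> ennreal ((2 * \<delta>) powr p) + (\<integral>\<^sup>+y. indicator (- W) y * \<phi> y \<partial>\<mu>)"
    unfolding \<phi>_def using \<open>p > 0\<close> near
    by (intro kernel_transport_cost_le[OF sets prob g(1,3) W_borel g(4)]) auto
  moreover have "(\<integral>\<^sup>+y. indicator (- W) y * \<phi> y \<partial>\<mu>) < ennreal (e powr p / 2)"
    using nn_integral_indicator_compl_le[OF sets(2) W(2)] tail by (rule order.strict_trans1)
  ultimately have "(\<integral>\<^sup>+w. g w * ennreal (norm (fst w - snd w) powr p) \<partial>(\<nu> \<Otimes>\<^sub>M \<mu>))
      < ennreal (e powr p / 2) + ennreal (e powr p / 2)"
    using two_\<delta> by (simp add: ennreal_add_left_cancel_less order.strict_trans1)
  also have "\<dots> = ennreal (e powr p)"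
    by (simp flip: ennreal_plus)
  finally show ?thesis
    using \<open>p > 0\<close> \<open>e > 0\<close> \<nu> \<mu> g(1-3) by (intro Qinf_Wdist_less_if_kernel_cost_less)
qed

theorem theorem8:
  fixes \<nu> :: "'a::euclidean_space measure" and p :: real
  assumes "p \<ge> 1" and "\<nu> \<in> Wspace p"
  shows "Wclosure p (Qinf \<nu>) = {\<mu> \<in> Wspace p. supp \<mu> \<subseteq> supp \<nu>}"
proof
  have "p > 0" and \<nu>: "sets \<nu> = sets borel" "prob_space \<nu>"
    using assms by (auto simp: Wspace_def)
  show "Wclosure p (Qinf \<nu>) \<subseteq> {\<mu> \<in> Wspace p. supp \<mu> \<subseteq> supp \<nu>}"
  proof
    fix \<mu> assume \<mu>: "\<mu> \<in> Wclosure p (Qinf \<nu>)"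
    then show "\<mu> \<in> {\<mu> \<in> Wspace p. supp \<mu> \<subseteq> supp \<nu>}"
      using supp_subset_if_in_Wclosure[OF \<open>p > 0\<close> \<nu> \<mu>] by (simp add: Wclosure_def)
  qed
  show "{\<mu> \<in> Wspace p. supp \<mu> \<subseteq> supp \<nu>} \<subseteq> Wclosure p (Qinf \<nu>)"
    using exists_Qinf_Wdist_less[OF _ _ assms(2)] \<open>p > 0\<close> by (auto simp: Wclosure_def)
qed

end
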